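(* Let $d\le n$ be nonnegative integers and let $\mathcal P_d$ be the linear operator on functions $f:\{\pm1\}^n\to\mathbb R$ mapping $f=\sum_{\alpha\subseteq[n]}\hat f_\alpha\chi_\alpha$ to its low-degree part $\sum_{|\alpha|\le d}\hat f_\alpha\chi_\alpha$, where $\chi_\alpha(x)=\prod_{i\in\alpha}x_i$. Then $\textsf{Tensor-SDP}(\mathcal P_d)\le 9^d$.
   Context: A level-$r$ pseudo-expectation functional on polynomials in variables $y_1,\dots,y_N$ is a map $\tilde{\mathbb E}$ from real polynomials of degree at most $r$ to $\mathbb R$ that is linear, satisfies $\tilde{\mathbb E}[1]=1$, and satisfies $\tilde{\mathbb E}[P^2]\ge 0$ for every polynomial $P$ of degree at most $r/2$. For a linear operator $A$ from functions on a finite set $\mathcal U$ to functions on a finite set $\mathcal V$, $\textsf{Tensor-SDP}^{(r)}(A)$ is the maximum of $\tilde{\mathbb E}_f\|Af\|_4^4$ over level-$r$ pseudo-expectation functionals $\tilde{\mathbb E}$ on polynomials in the variables $\{f(u)\}_{u\in\mathcal U}$ satisfying $\tilde{\mathbb E}_f(\|f\|_2^2-1)^2=0$; here $\|g\|_p=(\mathbb E_{v}|g(v)|^p)^{1/p}$ is the expectation norm (uniform average), so $\|Af\|_4^4$ and $\|f\|_2^2$ are polynomials in the variables $f(u)$. $\textsf{Tensor-SDP}$ denotes $\textsf{Tensor-SDP}^{(4)}$. Expectations over $\{\pm1\}^n$ are with respect to the uniform distribution. *)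

theory Defs
  imports Complex_Main "HOL-Library.Multiset"
begin

text \<open>Real polynomials in variables indexed by elements of type 'u are represented by
  their coefficient functions on monomials (multisets of variables).\<close>

type_synonym 'u rpoly = "'u multiset \<Rightarrow> real"

definition monomials :: "'u set \<Rightarrow> nat \<Rightarrow> 'u multiset set" where
  "monomials U r = {m. set_mset m \<subseteq> U \<and> size m \<le> r}"

definition polys :: "'u set \<Rightarrow> nat \<Rightarrow> 'u rpoly set" where
  "polys U r = {P. \<forall>m. P m \<noteq> 0 \<longrightarrow> m \<in> monomials U r}"

definition pconst :: "real \<Rightarrow> 'u rpoly" where
  "pconst c = (\<lambda>m. if m = {#} then c else 0)"

definition pvar :: "'u \<Rightarrow> 'u rpoly" where
  "pvar u = (\<lambda>m. if m = {#u#} then 1 else 0)"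

definition padd :: "'u rpoly \<Rightarrow> 'u rpoly \<Rightarrow> 'u rpoly" where
  "padd P Q = (\<lambda>m. P m + Q m)"

definition psmult :: "real \<Rightarrow> 'u rpoly \<Rightarrow> 'u rpoly" where
  "psmult c P = (\<lambda>m. c * P m)"

definition pmult :: "'u rpoly \<Rightarrow> 'u rpoly \<Rightarrow> 'u rpoly" where
  "pmult P Q = (\<lambda>m. \<Sum>a\<in>{a. a \<subseteq># m}. P a * Q (m - a))"

definition ppow :: "'u rpoly \<Rightarrow> nat \<Rightarrow> 'u rpoly" where
  "ppow P k = (pmult P ^^ k) (pconst 1)"

definition psum :: "('i \<Rightarrow> 'u rpoly) \<Rightarrow> 'i set \<Rightarrow> 'u rpoly" where
  "psum F I = (\<lambda>m. \<Sum>i\<in>I. F i m)"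

definition is_pseudo_exp :: "'u set \<Rightarrow> nat \<Rightarrow> ('u rpoly \<Rightarrow> real) \<Rightarrow> bool" where
  "is_pseudo_exp U r E \<longleftrightarrow>
     (\<forall>P\<in>polys U r. \<forall>Q\<in>polys U r. E (padd P Q) = E P + E Q) \<and>
     (\<forall>c. \<forall>P\<in>polys U r. E (psmult c P) = c * E P) \<and>
     E (pconst 1) = 1 \<and>
     (\<forall>P\<in>polys U (r div 2). E (pmult P P) \<ge> 0)"

text \<open>For a linear operator A from functions on U to functions on V, the value (A f)(v)
  as a (linear) polynomial in the variables f(u), u in U.\<close>
definition op_poly :: "'u set \<Rightarrow> (('u \<Rightarrow> real) \<Rightarrow> ('v \<Rightarrow> real)) \<Rightarrow> 'v \<Rightarrow> 'u rpoly" where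
  "op_poly U A v = psum (\<lambda>u. psmult (A (\<lambda>w. if w = u then 1 else 0) v) (pvar u)) U"

definition norm4_4_poly :: "'u set \<Rightarrow> 'v set \<Rightarrow> (('u \<Rightarrow> real) \<Rightarrow> ('v \<Rightarrow> real)) \<Rightarrow> 'u rpoly" where
  "norm4_4_poly U V A = psmult (1 / real (card V)) (psum (\<lambda>v. ppow (op_poly U A v) 4) V)"

definition norm2_2_poly :: "'u set \<Rightarrow> 'u rpoly" where
  "norm2_2_poly U = psmult (1 / real (card U)) (psum (\<lambda>u. pmult (pvar u) (pvar u)) U)"

definition tensor_sdp_level ::
  "nat \<Rightarrow> 'u set \<Rightarrow> 'v set \<Rightarrow> (('u \<Rightarrow> real) \<Rightarrow> ('v \<Rightarrow> real)) \<Rightarrow> real" where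
  "tensor_sdp_level r U V A =
     Sup {E (norm4_4_poly U V A) | E. is_pseudo_exp U r E \<and>
            E (ppow (padd (norm2_2_poly U) (pconst (-1))) 2) = 0}"

definition tensor_sdp :: "'u set \<Rightarrow> 'v set \<Rightarrow> (('u \<Rightarrow> real) \<Rightarrow> ('v \<Rightarrow> real)) \<Rightarrow> real" where
  "tensor_sdp U V A = tensor_sdp_level 4 U V A"

definition cube :: "nat \<Rightarrow> (nat \<Rightarrow> real) set" where
  "cube n = {x. (\<forall>i<n. x i = 1 \<or> x i = -1) \<and> (\<forall>i\<ge>n. x i = 0)}"

definition chi :: "nat set \<Rightarrow> (nat \<Rightarrow> real) \<Rightarrow> real" where
  "chi \<alpha> x = (\<Prod>i\<in>\<alpha>. x i)"

definition fourier_coeff :: "nat \<Rightarrow> ((nat \<Rightarrow> real) \<Rightarrow> real) \<Rightarrow> nat set \<Rightarrow> real" where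
  "fourier_coeff n f \<alpha> = (\<Sum>x\<in>cube n. f x * chi \<alpha> x) / real (card (cube n))"

definition low_deg_proj :: "nat \<Rightarrow> nat \<Rightarrow> ((nat \<Rightarrow> real) \<Rightarrow> real) \<Rightarrow> ((nat \<Rightarrow> real) \<Rightarrow> real)" where
  "low_deg_proj n d f = (\<lambda>x. \<Sum>\<alpha>\<in>{\<alpha>. \<alpha> \<subseteq> {..<n} \<and> card \<alpha> \<le> d}. fourier_coeff n f \<alpha> * chi \<alpha> x)"

end

theory Submission
  imports Defs "HOL-Library.Poly_Mapping"
begin

text \<open>In terms of the Fourier coefficients \<open>a\<^sub>\<alpha>\<close> of \<open>g\<close> and \<open>b\<^sub>\<alpha>\<close> of \<open>h\<close>, Bonami's inequality in the
  product form \<open>\<bbbE>\<^sub>x g(x)\<^sup>2 h(x)\<^sup>2 \<le> (\<Sum>\<^sub>\<alpha> 3\<^bsup>|\<alpha>|\<^esup> a\<^sub>\<alpha>\<^sup>2) (\<Sum>\<^sub>\<alpha> 3\<^bsup>|\<alpha>|\<^esup> b\<^sub>\<alpha>\<^sup>2)\<close> has a degree-4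
  sum-of-squares proof in the coefficients, by induction on \<open>n\<close>. For \<open>g = h = \<P>\<^sub>d f\<close> the
  right-hand side is at most \<open>(3\<^sup>d \<parallel>f\<parallel>\<^sub>2\<^sup>2)\<^sup>2\<close>, and the difference is a product of two nonnegative
  combinations of squares, hence again a sum of squares. So every level-4 pseudo-expectation \<open>E\<close>
  satisfies \<open>E \<parallel>\<P>\<^sub>d f\<parallel>\<^sub>4\<^sup>4 \<le> 9\<^sup>d E \<parallel>f\<parallel>\<^sub>2\<^sup>4\<close>, and the constraint \<open>E (\<parallel>f\<parallel>\<^sub>2\<^sup>2 - 1)\<^sup>2 = 0\<close> forces
  \<open>E \<parallel>f\<parallel>\<^sub>2\<^sup>4 = 1\<close> by Cauchy--Schwarz.\<close>

section \<open>Polynomials as finitely supported coefficient functions\<close>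

text \<open>Computations are done in the ring \<open>'u multiset \<Rightarrow>\<^sub>0 real\<close>, where \<open>algebra_simps\<close> applies;
  \<open>coeffs\<close> translates back to the coefficient functions of the definitions.\<close>

type_synonym 'u mpoly = "'u multiset \<Rightarrow>\<^sub>0 real"

abbreviation coeffs :: "'u mpoly \<Rightarrow> 'u rpoly" where
  "coeffs \<equiv> Poly_Mapping.lookup"

definition mconst :: "real \<Rightarrow> 'u mpoly" where
  "mconst c = Poly_Mapping.single {#} c"

definition mvar :: "'u \<Rightarrow> 'u mpoly" where
  "mvar u = Poly_Mapping.single {#u#} 1"

definition mpolys :: "'u set \<Rightarrow> nat \<Rightarrow> 'u mpoly set" where
  "mpolys U r = {p. Poly_Mapping.keys p \<subseteq> monomials U r}"

lemma finite_monomials: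
  assumes "finite U"
  shows "finite (monomials U r)"
proof -
  have "monomials U r = (\<Union>k\<le>r. multisets_of_size U k)"
    by (auto simp: monomials_def multisets_of_size_def)
  with assms show ?thesis by auto
qed

lemma finite_submultisets: "finite {a. a \<subseteq># (m::'a multiset)}"
proof (rule finite_subset)
  show "{a. a \<subseteq># m} \<subseteq> monomials (set_mset m) (size m)"
    by (auto simp: monomials_def size_mset_mono dest: mset_subset_eqD)
qed (simp add: finite_monomials)

lemma coeffs_mult: "coeffs (p * q) = pmult (coeffs p) (coeffs q)"
proof
  fix m
  have inner: "Sum_any (\<lambda>r. coeffs q r when m = l + r) = (if l \<subseteq># m then coeffs q (m - l) else 0)"
    for l
  proof (cases "l \<subseteq># m")
    case True
    then obtain r0 where r0: "m = l + r0" by (metis subset_mset.add_diff_inverse)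
    have "Sum_any (\<lambda>r. coeffs q r when m = l + r) = Sum_any (\<lambda>r. coeffs q r when r0 = r)"
      by (rule Sum_any.cong) (auto simp: r0)
    then show ?thesis using r0 by simp
  next
    case False
    then have "(\<lambda>r. coeffs q r when m = l + r) = (\<lambda>r. 0)"
      by (auto simp: when_def fun_eq_iff)
    with False show ?thesis by (metis Sum_any.neutral)
  qed
  have "coeffs (p * q) m = Sum_any (\<lambda>l. coeffs p l * (if l \<subseteq># m then coeffs q (m - l) else 0))"
    by (simp add: lookup_mult inner)
  also have "\<dots> = (\<Sum>l\<in>{a. a \<subseteq># m}. coeffs p l * (if l \<subseteq># m then coeffs q (m - l) else 0))"
    by (rule Sum_any.expand_superset) (auto simp: finite_submultisets)
  also have "\<dots> = pmult (coeffs p) (coeffs q) m"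
    unfolding pmult_def by (rule sum.cong) auto
  finally show "coeffs (p * q) m = pmult (coeffs p) (coeffs q) m" .
qed

lemma coeffs_add: "coeffs (p + q) = padd (coeffs p) (coeffs q)"
  by (simp add: padd_def fun_eq_iff lookup_add)

lemma coeffs_mconst: "coeffs (mconst c) = pconst c"
  by (auto simp: mconst_def pconst_def fun_eq_iff lookup_single when_def)

lemma coeffs_one: "coeffs 1 = pconst 1"
  by (auto simp: pconst_def fun_eq_iff lookup_one when_def)

lemma coeffs_mvar: "coeffs (mvar u) = pvar u"
  by (auto simp: mvar_def pvar_def fun_eq_iff lookup_single when_def)

lemma coeffs_mconst_mult: "coeffs (mconst c * p) = psmult c (coeffs p)"
proof -
  have "pmult (pconst c) (coeffs p) m = c * coeffs p m" for m
  proof -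
    have "pmult (pconst c) (coeffs p) m = (\<Sum>a\<in>{a. a \<subseteq># m}. if a = {#} then c * coeffs p m else 0)"
      unfolding pmult_def pconst_def by (rule sum.cong) auto
    then show ?thesis by (simp add: finite_submultisets)
  qed
  then show ?thesis by (simp add: coeffs_mult coeffs_mconst psmult_def fun_eq_iff)
qed

lemma coeffs_sum: "coeffs (sum F I) = psum (\<lambda>i. coeffs (F i)) I"
  by (simp add: psum_def fun_eq_iff lookup_sum)

lemma coeffs_power: "coeffs (p ^ k) = ppow (coeffs p) k"
  by (induction k) (simp_all add: ppow_def coeffs_one coeffs_mult)

lemma mpolys_iff_polys: "p \<in> mpolys U r \<longleftrightarrow> coeffs p \<in> polys U r"
  by (auto simp: mpolys_def polys_def in_keys_iff)

lemma mconst_add: "mconst (a + b) = mconst a + mconst b"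
  by (simp add: mconst_def single_add)

lemma mconst_mult: "mconst (a * b) = mconst a * mconst b"
  by (simp add: mconst_def mult_single)

lemma mconst_one [simp]: "mconst 1 = 1"
  by (simp add: mconst_def single_one)

lemma mconst_zero [simp]: "mconst 0 = 0"
  by (simp add: mconst_def)

lemma mconst_uminus: "mconst (- a) = - mconst a"
  by (simp add: mconst_def single_uminus)

lemma mconst_diff: "mconst (a - b) = mconst a - mconst b"
  by (simp add: mconst_def single_diff)

lemma mconst_sum: "mconst (sum f I) = (\<Sum>i\<in>I. mconst (f i))"
  by (induction I rule: infinite_finite_induct) (simp_all add: mconst_add)

lemma of_nat_eq_mconst: "of_nat k = mconst (real k)"
  by (simp add: mconst_def single_of_nat)

lemma mconst_numeral: "mconst (numeral k) = numeral k"
  using of_nat_eq_mconst[of "numeral k"] by simp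

lemma mpolys_zero [simp]: "0 \<in> mpolys U r"
  by (simp add: mpolys_def)

lemma mpolys_add: "p \<in> mpolys U r \<Longrightarrow> q \<in> mpolys U r \<Longrightarrow> p + q \<in> mpolys U r"
  unfolding mpolys_def using keys_add[of p q] by blast

lemma mpolys_uminus: "p \<in> mpolys U r \<Longrightarrow> - p \<in> mpolys U r"
  by (simp add: mpolys_def)

lemma mpolys_diff: "p \<in> mpolys U r \<Longrightarrow> q \<in> mpolys U r \<Longrightarrow> p - q \<in> mpolys U r"
  using mpolys_add[of p U r "- q"] mpolys_uminus[of q U r] by simp

lemma mpolys_mono: "p \<in> mpolys U r \<Longrightarrow> r \<le> r' \<Longrightarrow> p \<in> mpolys U r'"
  by (auto simp: mpolys_def monomials_def)

lemma mpolys_mult: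
  assumes "p \<in> mpolys U a" and "q \<in> mpolys U b"
  shows "p * q \<in> mpolys U (a + b)"
  unfolding mpolys_def mem_Collect_eq
proof
  fix m assume "m \<in> Poly_Mapping.keys (p * q)"
  then obtain x y where "m = x + y" "x \<in> Poly_Mapping.keys p" "y \<in> Poly_Mapping.keys q"
    using keys_mult[of p q] by blast
  with assms show "m \<in> monomials U (a + b)"
    by (auto simp: mpolys_def monomials_def subset_iff add_mono)
qed

lemma mpolys_mult_linear: "p \<in> mpolys U 1 \<Longrightarrow> q \<in> mpolys U 1 \<Longrightarrow> p * q \<in> mpolys U 2"
  using mpolys_mult[of p U 1 q 1] by (simp add: numeral_2_eq_2)

lemma mpolys_mult_quadratic: "p \<in> mpolys U 2 \<Longrightarrow> q \<in> mpolys U 2 \<Longrightarrow> p * q \<in> mpolys U 4"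
  using mpolys_mult[of p U 2 q 2] by simp

lemma mpolys_mult_half:
  "p \<in> mpolys U (r div 2) \<Longrightarrow> q \<in> mpolys U (r div 2) \<Longrightarrow> p * q \<in> mpolys U r"
  using mpolys_mono[OF mpolys_mult, of p U "r div 2" q "r div 2" r] by linarith

lemma mpolys_mconst: "mconst c \<in> mpolys U r"
  by (auto simp: mpolys_def mconst_def monomials_def)

lemma mpolys_one: "1 \<in> mpolys U r"
  using mpolys_mconst[of 1 U r] by simp

lemma mpolys_mconst_mult: "p \<in> mpolys U r \<Longrightarrow> mconst c * p \<in> mpolys U r"
  using mpolys_mult[OF mpolys_mconst[of c U 0]] by simp

lemma mpolys_mvar: "u \<in> U \<Longrightarrow> mvar u \<in> mpolys U 1"
  by (auto simp: mpolys_def mvar_def monomials_def)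

lemma mpolys_sum: "(\<And>i. i \<in> I \<Longrightarrow> F i \<in> mpolys U r) \<Longrightarrow> sum F I \<in> mpolys U r"
  by (induction I rule: infinite_finite_induct) (simp_all add: mpolys_add)

section \<open>Sums of squares and pseudo-expectations\<close>

inductive_set sos :: "'u set \<Rightarrow> nat \<Rightarrow> 'u mpoly set" for U k where
  square: "s \<in> mpolys U k \<Longrightarrow> s * s \<in> sos U k"
| zero: "0 \<in> sos U k"
| add: "a \<in> sos U k \<Longrightarrow> b \<in> sos U k \<Longrightarrow> a + b \<in> sos U k"
| scale: "a \<in> sos U k \<Longrightarrow> c \<ge> 0 \<Longrightarrow> mconst c * a \<in> sos U k"

lemma sos_mpolys: "a \<in> sos U k \<Longrightarrow> a \<in> mpolys U (2 * k)"
proof (induction rule: sos.induct)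
  case (square s)
  then show ?case using mpolys_mult[of s U k s k] by (simp add: mult_2)
qed (auto intro: mpolys_add mpolys_mconst_mult)

lemma sos_half_mpolys: "a \<in> sos U (r div 2) \<Longrightarrow> a \<in> mpolys U r"
  using mpolys_mono[OF sos_mpolys, of a U "r div 2" r] by linarith

lemma sos_sum: "(\<And>i. i \<in> I \<Longrightarrow> F i \<in> sos U k) \<Longrightarrow> sum F I \<in> sos U k"
  by (induction I rule: infinite_finite_induct) (simp_all add: sos.zero sos.add)

lemma sos_of_nat_mult: "a \<in> sos U k \<Longrightarrow> of_nat j * a \<in> sos U k"
  by (simp add: of_nat_eq_mconst sos.scale)

lemma sos_numeral_mult: "a \<in> sos U k \<Longrightarrow> numeral j * a \<in> sos U k"
  using sos_of_nat_mult[of a U k "numeral j"] by simp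

lemma weighted_squares_mult_sos:
  assumes "\<And>i. i \<in> I \<Longrightarrow> x i \<in> mpolys U 1" and "\<And>i. i \<in> I \<Longrightarrow> c i \<ge> 0"
    and "\<And>j. j \<in> J \<Longrightarrow> y j \<in> mpolys U 1" and "\<And>j. j \<in> J \<Longrightarrow> c' j \<ge> 0"
  shows "(\<Sum>i\<in>I. mconst (c i) * (x i * x i)) * (\<Sum>j\<in>J. mconst (c' j) * (y j * y j)) \<in> sos U 2"
proof -
  have "(\<Sum>i\<in>I. mconst (c i) * (x i * x i)) * (\<Sum>j\<in>J. mconst (c' j) * (y j * y j))
      = (\<Sum>j\<in>J. \<Sum>i\<in>I. mconst (c i * c' j) * ((x i * y j) * (x i * y j)))"
    by (simp add: sum_distrib_left sum_distrib_right mconst_mult algebra_simps)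
  also have "\<dots> \<in> sos U 2"
    using assms by (intro sos_sum sos.scale sos.square) (auto intro: mpolys_mult_linear)
  finally show ?thesis .
qed

lemma quadratic_nonneg_imp_linear_coeff_zero:
  fixes a b :: real
  assumes nonneg: "\<And>t. 0 \<le> 2 * t * a + t\<^sup>2 * b"
  shows "a = 0"
proof -
  define s where "s = \<bar>b\<bar> + 1"
  have s: "s > 0" "b - 2 * s < 0" by (auto simp: s_def)
  have "0 \<le> s\<^sup>2 * (2 * (- a / s) * a + (- a / s)\<^sup>2 * b)"
    using nonneg[of "- a / s"] by simp
  also have "\<dots> = a\<^sup>2 * (b - 2 * s)"
    using s by (simp add: field_simps power2_eq_square)
  finally have "a\<^sup>2 \<le> 0"
    using s by (simp add: zero_le_mult_iff)
  then show "a = 0" by simp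
qed

locale pseudo_expectation =
  fixes U :: "'u set" and r :: nat and E :: "'u rpoly \<Rightarrow> real"
  assumes is_pseudo_exp: "is_pseudo_exp U r E"
begin

definition pE :: "'u mpoly \<Rightarrow> real" where
  "pE p = E (coeffs p)"

lemma pE_add: "p \<in> mpolys U r \<Longrightarrow> q \<in> mpolys U r \<Longrightarrow> pE (p + q) = pE p + pE q"
  using is_pseudo_exp by (simp add: is_pseudo_exp_def pE_def coeffs_add mpolys_iff_polys)

lemma pE_mconst_mult: "p \<in> mpolys U r \<Longrightarrow> pE (mconst c * p) = c * pE p"
  using is_pseudo_exp by (simp add: is_pseudo_exp_def pE_def coeffs_mconst_mult mpolys_iff_polys)

lemma pE_one: "pE 1 = 1"
  using is_pseudo_exp by (simp add: is_pseudo_exp_def pE_def coeffs_one)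

lemma pE_square_nonneg: "s \<in> mpolys U (r div 2) \<Longrightarrow> pE (s * s) \<ge> 0"
  using is_pseudo_exp by (simp add: is_pseudo_exp_def pE_def coeffs_mult mpolys_iff_polys)

lemma pE_zero: "pE 0 = 0"
  using pE_add[of 0 0] by simp

lemma pE_diff: "p \<in> mpolys U r \<Longrightarrow> q \<in> mpolys U r \<Longrightarrow> pE (p - q) = pE p - pE q"
  using pE_add[of p "- q"] pE_mconst_mult[of q "- 1"]
  by (simp add: mpolys_uminus mconst_uminus)

lemma pE_sos_nonneg: "a \<in> sos U (r div 2) \<Longrightarrow> pE a \<ge> 0"
proof (induction rule: sos.induct)
  case (square s)
  then show ?case by (rule pE_square_nonneg)
next
  case zero
  then show ?case by (simp add: pE_zero)
qed (simp_all add: pE_add pE_mconst_mult sos_half_mpolys)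

text \<open>Cauchy--Schwarz: expanding \<open>pE ((Z + t W)\<^sup>2) \<ge> 0\<close> gives a quadratic in \<open>t\<close>
  without constant term.\<close>
lemma pE_mult_eq_0_if_square_eq_0:
  assumes Z: "Z \<in> mpolys U (r div 2)" and W: "W \<in> mpolys U (r div 2)"
    and Z0: "pE (Z * Z) = 0"
  shows "pE (Z * W) = 0"
proof (rule quadratic_nonneg_imp_linear_coeff_zero)
  fix t
  have "(Z + mconst t * W) * (Z + mconst t * W)
      = Z * Z + (mconst (2 * t) * (Z * W) + mconst (t\<^sup>2) * (W * W))"
    by (simp add: mconst_mult mconst_numeral power2_eq_square algebra_simps)
  moreover have "Z * Z \<in> mpolys U r" "Z * W \<in> mpolys U r" "W * W \<in> mpolys U r"
    using Z W by (auto intro: mpolys_mult_half)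
  moreover have "0 \<le> pE ((Z + mconst t * W) * (Z + mconst t * W))"
    using Z W by (intro pE_square_nonneg mpolys_add mpolys_mconst_mult)
  ultimately show "0 \<le> 2 * t * pE (Z * W) + t\<^sup>2 * pE (W * W)"
    using Z0 by (simp add: pE_add pE_mconst_mult mpolys_add mpolys_mconst_mult)
qed

lemma pE_square_eq_1:
  assumes N: "N \<in> mpolys U (r div 2)" and N1: "pE ((N - 1) * (N - 1)) = 0"
  shows "pE (N * N) = 1"
proof -
  have "pE ((N - 1) * (N + 1)) = 0"
    using pE_mult_eq_0_if_square_eq_0[OF mpolys_diff[OF N mpolys_one] mpolys_add[OF N mpolys_one] N1] .
  moreover have "(N - 1) * (N + 1) = N * N - 1"
    by (simp add: algebra_simps)
  ultimately show ?thesis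
    using N by (simp add: pE_diff pE_one mpolys_mult_half mpolys_one)
qed

end

definition eval_ones :: "'u mpoly \<Rightarrow> real" where
  "eval_ones p = (\<Sum>k\<in>Poly_Mapping.keys p. coeffs p k)"

lemma eval_ones_superset:
  "finite S \<Longrightarrow> Poly_Mapping.keys p \<subseteq> S \<Longrightarrow> eval_ones p = sum (coeffs p) S"
  unfolding eval_ones_def by (rule sum.mono_neutral_left) (auto simp: in_keys_iff)

lemma eval_ones_add: "eval_ones (p + q) = eval_ones p + eval_ones q"
proof -
  let ?S = "Poly_Mapping.keys p \<union> Poly_Mapping.keys q"
  have "eval_ones (p + q) = sum (coeffs (p + q)) ?S"
    by (rule eval_ones_superset) (auto dest: keys_add[THEN subsetD])
  also have "\<dots> = sum (coeffs p) ?S + sum (coeffs q) ?S"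
    by (simp add: lookup_add sum.distrib)
  also have "\<dots> = eval_ones p + eval_ones q"
    using eval_ones_superset[of ?S p] eval_ones_superset[of ?S q] by simp
  finally show ?thesis .
qed

lemma eval_ones_sum: "eval_ones (sum F I) = (\<Sum>i\<in>I. eval_ones (F i))"
  by (induction I rule: infinite_finite_induct) (simp_all add: eval_ones_add eval_ones_def[of 0])

lemma eval_ones_single: "eval_ones (Poly_Mapping.single a c) = c"
  by (cases "c = 0") (simp_all add: eval_ones_def)

lemma eval_ones_mult: "eval_ones (p * q) = eval_ones p * eval_ones q"
proof -
  have expand: "f = (\<Sum>a\<in>Poly_Mapping.keys f. Poly_Mapping.single a (coeffs f a))" for f :: "'u mpoly"
    by (rule poly_mapping_eqI) (auto simp: lookup_sum lookup_single when_def in_keys_iff)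
  have "p * q = (\<Sum>b\<in>Poly_Mapping.keys q. \<Sum>a\<in>Poly_Mapping.keys p.
      Poly_Mapping.single (a + b) (coeffs p a * coeffs q b))"
    by (subst expand[of p], subst expand[of q])
       (simp add: sum_distrib_left sum_distrib_right mult_single)
  then have "eval_ones (p * q) =
      (\<Sum>b\<in>Poly_Mapping.keys q. \<Sum>a\<in>Poly_Mapping.keys p. coeffs p a * coeffs q b)"
    by (simp add: eval_ones_sum eval_ones_single)
  also have "\<dots> = eval_ones p * eval_ones q"
    by (simp add: eval_ones_def sum_product sum.swap[of _ "Poly_Mapping.keys q"])
  finally show ?thesis .
qed

lemma eval_ones_mconst: "eval_ones (mconst c) = c"
  by (simp add: mconst_def eval_ones_single)

lemma eval_ones_one: "eval_ones 1 = 1"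
  using eval_ones_mconst[of 1] by simp

lemma eval_ones_diff: "eval_ones (p - q) = eval_ones p - eval_ones q"
  using eval_ones_add[of "p - q" q] by simp

lemma eval_ones_mvar: "eval_ones (mvar u) = 1"
  by (simp add: mvar_def eval_ones_single)

text \<open>Evaluation at the point where every variable equals \<open>1\<close>: a genuine expectation, hence a
  pseudo-expectation of every level.\<close>
definition ones_pexp :: "'u set \<Rightarrow> nat \<Rightarrow> 'u rpoly \<Rightarrow> real" where
  "ones_pexp U r P = (\<Sum>m\<in>monomials U r. P m)"

lemma ones_pexp_coeffs:
  "finite U \<Longrightarrow> p \<in> mpolys U r \<Longrightarrow> ones_pexp U r (coeffs p) = eval_ones p"
  using eval_ones_superset[of "monomials U r" p] finite_monomials[of U r]
  by (simp add: ones_pexp_def mpolys_def)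

lemma is_pseudo_exp_ones_pexp:
  fixes U :: "'u set"
  assumes U: "finite U"
  shows "is_pseudo_exp U r (ones_pexp U r)"
  unfolding is_pseudo_exp_def
proof (intro conjI ballI allI)
  fix P Q :: "'u rpoly"
  show "ones_pexp U r (padd P Q) = ones_pexp U r P + ones_pexp U r Q"
    by (simp add: ones_pexp_def padd_def sum.distrib)
  show "ones_pexp U r (psmult c P) = c * ones_pexp U r P" for c
    by (simp add: ones_pexp_def psmult_def sum_distrib_left)
next
  show "ones_pexp U r (pconst 1) = 1"
    using U ones_pexp_coeffs[of U 1 r] by (simp add: coeffs_one mpolys_one eval_ones_one)
next
  fix P :: "'u rpoly" assume P: "P \<in> polys U (r div 2)"
  have "finite {m. P m \<noteq> 0}"
    using P U by (auto simp: polys_def intro: finite_subset[OF _ finite_monomials])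
  then obtain p where p: "coeffs p = P"
    by (metis lookup_Abs_poly_mapping)
  have "p * p \<in> mpolys U r"
    using P p by (intro mpolys_mult_half) (simp_all add: mpolys_iff_polys)
  then have "ones_pexp U r (pmult P P) = eval_ones p * eval_ones p"
    using U by (simp add: p[symmetric] coeffs_mult[symmetric] ones_pexp_coeffs eval_ones_mult)
  then show "ones_pexp U r (pmult P P) \<ge> 0" by simp
qed

section \<open>The hypercube and its characters\<close>

lemma cube_0: "cube 0 = {\<lambda>_. 0}"
  by (auto simp: cube_def)

lemma cube_Suc: "cube (Suc n) = (\<lambda>v. v(n := 1)) ` cube n \<union> (\<lambda>v. v(n := -1)) ` cube n"
proof (intro equalityI subsetI)
  fix w assume w: "w \<in> cube (Suc n)"
  then have "w(n := 0) \<in> cube n" "w = (w(n := 0))(n := w n)" "w n = 1 \<or> w n = -1"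
    by (auto simp: cube_def)
  then show "w \<in> (\<lambda>v. v(n := 1)) ` cube n \<union> (\<lambda>v. v(n := -1)) ` cube n"
    by (metis UnI1 UnI2 image_eqI)
qed (auto simp: cube_def less_Suc_eq)

lemma inj_on_fun_upd_cube: "inj_on (\<lambda>v. v(n := s)) (cube n)"
proof (rule inj_onI)
  fix v w assume "v \<in> cube n" "w \<in> cube n" "v(n := s) = w(n := s)"
  then show "v = w" by (auto simp: cube_def fun_eq_iff) (metis order_refl)
qed

lemma finite_cube: "finite (cube n)"
  by (induction n) (simp_all add: cube_0 cube_Suc)

lemma cube_Suc_disjoint: "(\<lambda>v. v(n := 1)) ` cube n \<inter> (\<lambda>v. v(n := -1)) ` cube n = {}"
  by (auto simp: fun_eq_iff) (metis fun_upd_same one_neq_neg_one)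

lemma sum_cube_Suc:
  "(\<Sum>w\<in>cube (Suc n). F w) = (\<Sum>v\<in>cube n. F (v(n := 1)) + F (v(n := -1)))"
proof -
  have "(\<Sum>w\<in>cube (Suc n). F w)
      = (\<Sum>w\<in>(\<lambda>v. v(n := 1)) ` cube n. F w) + (\<Sum>w\<in>(\<lambda>v. v(n := -1)) ` cube n. F w)"
    unfolding cube_Suc by (rule sum.union_disjoint) (auto simp: finite_cube cube_Suc_disjoint)
  then show ?thesis
    by (simp add: sum.reindex inj_on_fun_upd_cube sum.distrib)
qed

lemma card_cube: "card (cube n) = 2 ^ n"
proof (induction n)
  case (Suc n)
  have "card (cube (Suc n)) = card ((\<lambda>v. v(n := 1)) ` cube n) + card ((\<lambda>v. v(n := -1)) ` cube n)"
    unfolding cube_Suc by (rule card_Un_disjoint) (auto simp: finite_cube cube_Suc_disjoint)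
  with Suc show ?case by (simp add: card_image inj_on_fun_upd_cube)
qed (simp add: cube_0)

lemma chi_fun_upd: "\<alpha> \<subseteq> {..<n} \<Longrightarrow> chi \<alpha> (v(n := s)) = chi \<alpha> v"
  unfolding chi_def by (rule prod.cong) auto

lemma chi_insert: "\<alpha> \<subseteq> {..<n} \<Longrightarrow> chi (insert n \<alpha>) v = v n * chi \<alpha> v"
  unfolding chi_def by (subst prod.insert) (auto intro: finite_subset)

lemma sum_Pow_lessThan_Suc:
  "(\<Sum>\<alpha>\<in>Pow {..<Suc n}. F \<alpha>) = (\<Sum>\<alpha>\<in>Pow {..<n}. F \<alpha>) + (\<Sum>\<alpha>\<in>Pow {..<n}. F (insert n \<alpha>))"
proof -
  have "inj_on (insert n) (Pow {..<n})"
    by (rule inj_onI) (metis Pow_iff insert_ident lessThan_iff order_less_irrefl subset_iff)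
  moreover have "(\<Sum>\<alpha>\<in>Pow {..<Suc n}. F \<alpha>)
      = (\<Sum>\<alpha>\<in>Pow {..<n}. F \<alpha>) + (\<Sum>\<alpha>\<in>insert n ` Pow {..<n}. F \<alpha>)"
    unfolding lessThan_Suc Pow_insert by (rule sum.union_disjoint) auto
  ultimately show ?thesis by (simp add: sum.reindex)
qed

lemma chi_orthogonality:
  assumes u: "u \<in> cube n" and w: "w \<in> cube n"
  shows "(\<Sum>\<alpha>\<in>Pow {..<n}. chi \<alpha> u * chi \<alpha> w) = (if u = w then 2 ^ n else 0)"
proof -
  have "(\<Sum>\<alpha>\<in>Pow {..<n}. chi \<alpha> u * chi \<alpha> w)
      = (\<Sum>\<alpha>\<in>Pow {..<n}. (\<Prod>i\<in>\<alpha>. u i * w i) * (\<Prod>i\<in>{..<n} - \<alpha>. 1))"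
    unfolding chi_def by (simp add: prod.distrib)
  also have "\<dots> = (\<Prod>i\<in>{..<n}. u i * w i + 1)"
    by (rule prod_add[symmetric]) simp
  also have "\<dots> = (if u = w then 2 ^ n else 0)"
  proof (cases "u = w")
    case True
    have "(\<Prod>i\<in>{..<n}. u i * w i + 1) = (\<Prod>i\<in>{..<n}. 2)"
      by (rule prod.cong) (use u True in \<open>auto simp: cube_def\<close>)
    with True show ?thesis by simp
  next
    case False
    then obtain i where i: "u i \<noteq> w i" by auto
    have "i < n"
      using i u w by (auto simp: cube_def) (metis not_less)
    moreover have "u i = 1 \<or> u i = -1" "w i = 1 \<or> w i = -1"
      using u w \<open>i < n\<close> by (auto simp: cube_def)
    with i have "u i * w i + 1 = 0" by auto
    ultimately have "(\<Prod>i\<in>{..<n}. u i * w i + 1) = 0"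
      by (intro prod_zero) auto
    with False show ?thesis by simp
  qed
  finally show ?thesis .
qed

section \<open>A sum-of-squares proof of Bonami's inequality for products\<close>

text \<open>A family \<open>l\<close> indexed by subsets of \<open>{..<n}\<close> is read as the Fourier coefficients of a
  function \<open>g\<close> on the cube: \<open>fourier_sum n l v\<close> is \<open>g(v)\<close>, \<open>bonami_weight n l\<close> is
  \<open>\<Sum>\<^sub>\<alpha> 3\<^bsup>|\<alpha>|\<^esup> l\<^sub>\<alpha>\<^sup>2\<close>, and \<open>quartic_moment n l m\<close> is \<open>2\<^sup>n \<bbbE>\<^sub>v g(v)\<^sup>2 h(v)\<^sup>2\<close>.\<close>

definition fourier_sum :: "nat \<Rightarrow> (nat set \<Rightarrow> 'u mpoly) \<Rightarrow> (nat \<Rightarrow> real) \<Rightarrow> 'u mpoly" where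
  "fourier_sum n l v = (\<Sum>\<alpha>\<in>Pow {..<n}. mconst (chi \<alpha> v) * l \<alpha>)"

definition bonami_weight :: "nat \<Rightarrow> (nat set \<Rightarrow> 'u mpoly) \<Rightarrow> 'u mpoly" where
  "bonami_weight n l = (\<Sum>\<alpha>\<in>Pow {..<n}. mconst (3 ^ card \<alpha>) * (l \<alpha> * l \<alpha>))"

definition quartic_moment :: "nat \<Rightarrow> (nat set \<Rightarrow> 'u mpoly) \<Rightarrow> (nat set \<Rightarrow> 'u mpoly) \<Rightarrow> 'u mpoly" where
  "quartic_moment n l m =
     (\<Sum>v\<in>cube n. (fourier_sum n l v * fourier_sum n l v) * (fourier_sum n m v * fourier_sum n m v))"

lemma fourier_sum_mpolys: "(\<And>\<alpha>. l \<alpha> \<in> mpolys U 1) \<Longrightarrow> fourier_sum n l v \<in> mpolys U 1"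
  unfolding fourier_sum_def by (intro mpolys_sum mpolys_mconst_mult)

lemma quartic_moment_mpolys:
  "(\<And>\<alpha>. l \<alpha> \<in> mpolys U 1) \<Longrightarrow> (\<And>\<alpha>. m \<alpha> \<in> mpolys U 1) \<Longrightarrow> quartic_moment n l m \<in> mpolys U 4"
  unfolding quartic_moment_def
  by (intro mpolys_sum mpolys_mult_quadratic mpolys_mult_linear fourier_sum_mpolys)

lemma fourier_sum_Suc:
  "fourier_sum (Suc n) l (v(n := s)) = fourier_sum n l v + mconst s * fourier_sum n (\<lambda>\<alpha>. l (insert n \<alpha>)) v"
proof -
  have "fourier_sum (Suc n) l (v(n := s)) = fourier_sum n l v
      + (\<Sum>\<alpha>\<in>Pow {..<n}. mconst s * (mconst (chi \<alpha> v) * l (insert n \<alpha>)))"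
    unfolding fourier_sum_def sum_Pow_lessThan_Suc
    by (intro arg_cong2[where f="(+)"] sum.cong) (auto simp: chi_fun_upd chi_insert mconst_mult)
  then show ?thesis by (simp add: fourier_sum_def sum_distrib_left)
qed

lemma bonami_weight_Suc:
  "bonami_weight (Suc n) l = bonami_weight n l + 3 * bonami_weight n (\<lambda>\<alpha>. l (insert n \<alpha>))"
proof -
  have "card (insert n \<alpha>) = Suc (card \<alpha>)" if "\<alpha> \<in> Pow {..<n}" for \<alpha>
    using that by (subst card_insert_disjoint) (auto intro: finite_subset)
  then have "bonami_weight (Suc n) l = bonami_weight n l
      + (\<Sum>\<alpha>\<in>Pow {..<n}. 3 * (mconst (3 ^ card \<alpha>) * (l (insert n \<alpha>) * l (insert n \<alpha>))))"
    unfolding bonami_weight_def sum_Pow_lessThan_Suc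
    by (intro arg_cong2[where f="(+)"] refl sum.cong) (simp_all add: mconst_mult mconst_numeral)
  then show ?thesis by (simp add: bonami_weight_def sum_distrib_left)
qed

lemma parallelogram_quartic:
  fixes a b c e :: "'a :: comm_ring_1"
  shows "((a + b) * (a + b)) * ((c + e) * (c + e)) + ((a - b) * (a - b)) * ((c - e) * (c - e))
     = 2 * ((a * a) * (c * c)) + 2 * ((b * b) * (e * e)) + 6 * ((a * a) * (e * e))
       + 6 * ((b * b) * (c * c)) - 4 * ((a * e - b * c) * (a * e - b * c))"
  by (simp add: algebra_simps)

lemma quartic_moment_Suc:
  fixes n :: nat and l m :: "nat set \<Rightarrow> 'u mpoly"
  defines "l' \<equiv> \<lambda>\<alpha>. l (insert n \<alpha>)" and "m' \<equiv> \<lambda>\<alpha>. m (insert n \<alpha>)"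
  shows "quartic_moment (Suc n) l m = 2 * quartic_moment n l m + 2 * quartic_moment n l' m'
     + 6 * quartic_moment n l m' + 6 * quartic_moment n l' m
     - 4 * (\<Sum>v\<in>cube n. (fourier_sum n l v * fourier_sum n m' v - fourier_sum n l' v * fourier_sum n m v)
              * (fourier_sum n l v * fourier_sum n m' v - fourier_sum n l' v * fourier_sum n m v))"
proof -
  have "quartic_moment (Suc n) l m = (\<Sum>v\<in>cube n.
         2 * ((fourier_sum n l v * fourier_sum n l v) * (fourier_sum n m v * fourier_sum n m v))
       + 2 * ((fourier_sum n l' v * fourier_sum n l' v) * (fourier_sum n m' v * fourier_sum n m' v))
       + 6 * ((fourier_sum n l v * fourier_sum n l v) * (fourier_sum n m' v * fourier_sum n m' v))
       + 6 * ((fourier_sum n l' v * fourier_sum n l' v) * (fourier_sum n m v * fourier_sum n m v))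
       - 4 * ((fourier_sum n l v * fourier_sum n m' v - fourier_sum n l' v * fourier_sum n m v)
            * (fourier_sum n l v * fourier_sum n m' v - fourier_sum n l' v * fourier_sum n m v)))"
    unfolding quartic_moment_def sum_cube_Suc fourier_sum_Suc l'_def m'_def
    by (rule sum.cong) (simp_all only: mconst_one mconst_uminus mult_1 mult_minus_left
                          diff_conv_add_uminus[symmetric] parallelogram_quartic)
  then show ?thesis
    by (simp add: quartic_moment_def sum.distrib sum_subtractf sum_distrib_left)
qed

text \<open>Splitting off the last coordinate, \<open>g = g\<^sub>0 + x\<^sub>n g\<^sub>1\<close>, the parallelogram identity
  expresses \<open>\<bbbE> g\<^sup>2h\<^sup>2\<close> through the moments \<open>\<bbbE> g\<^sub>i\<^sup>2 h\<^sub>j\<^sup>2\<close> with coefficients \<open>2, 6, 6, 2\<close> minus a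
  square; the weight \<open>3\<close> per coordinate is exactly what covers the coefficients \<open>6\<close> of the
  mixed moments.\<close>
lemma quartic_moment_sos_bound:
  assumes "\<And>\<alpha>. l \<alpha> \<in> mpolys U 1" and "\<And>\<alpha>. m \<alpha> \<in> mpolys U 1"
  shows "of_nat (2 ^ n) * (bonami_weight n l * bonami_weight n m) - quartic_moment n l m \<in> sos U 2"
  using assms
proof (induction n arbitrary: l m)
  case 0
  have "quartic_moment 0 l m = of_nat (2 ^ 0) * (bonami_weight 0 l * bonami_weight 0 m)"
    by (simp add: quartic_moment_def bonami_weight_def fourier_sum_def cube_0 chi_def)
  then show ?case by (simp add: sos.zero)
next
  case (Suc n)
  define l' where "l' = (\<lambda>\<alpha>. l (insert n \<alpha>))"
  define m' where "m' = (\<lambda>\<alpha>. m (insert n \<alpha>))"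
  let ?K = "of_nat (2 ^ n) :: 'a mpoly"
  let ?S = "\<Sum>v\<in>cube n. (fourier_sum n l v * fourier_sum n m' v - fourier_sum n l' v * fourier_sum n m v)
              * (fourier_sum n l v * fourier_sum n m' v - fourier_sum n l' v * fourier_sum n m v)"
  have l': "\<And>\<alpha>. l' \<alpha> \<in> mpolys U 1" and m': "\<And>\<alpha>. m' \<alpha> \<in> mpolys U 1"
    using Suc.prems by (auto simp: l'_def m'_def)
  have "of_nat (2 ^ Suc n) * (bonami_weight (Suc n) l * bonami_weight (Suc n) m) - quartic_moment (Suc n) l m
     = 2 * (?K * (bonami_weight n l * bonami_weight n m) - quartic_moment n l m)
       + 2 * (?K * (bonami_weight n l' * bonami_weight n m') - quartic_moment n l' m')
       + 6 * (?K * (bonami_weight n l * bonami_weight n m') - quartic_moment n l m')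
       + 6 * (?K * (bonami_weight n l' * bonami_weight n m) - quartic_moment n l' m)
       + 16 * (?K * (bonami_weight n l' * bonami_weight n m')) + 4 * ?S"
    unfolding bonami_weight_Suc quartic_moment_Suc l'_def m'_def by (simp add: algebra_simps)
  also have "\<dots> \<in> sos U 2"
  proof (intro sos.add sos_numeral_mult sos_of_nat_mult)
    show "bonami_weight n l' * bonami_weight n m' \<in> sos U 2"
      unfolding bonami_weight_def by (rule weighted_squares_mult_sos) (use l' m' in auto)
    show "?S \<in> sos U 2"
      using Suc.prems l' m' by (intro sos_sum sos.square mpolys_diff mpolys_mult_linear fourier_sum_mpolys)
  qed (use Suc l' m' in blast)+
  finally show ?case .
qed

section \<open>The low-degree projection\<close>

definition fourier_poly :: "nat \<Rightarrow> nat set \<Rightarrow> (nat \<Rightarrow> real) mpoly" where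
  "fourier_poly n \<alpha> = (\<Sum>u\<in>cube n. mconst (chi \<alpha> u / 2 ^ n) * mvar u)"

definition low_fourier_poly :: "nat \<Rightarrow> nat \<Rightarrow> nat set \<Rightarrow> (nat \<Rightarrow> real) mpoly" where
  "low_fourier_poly n d \<alpha> = (if card \<alpha> \<le> d then fourier_poly n \<alpha> else 0)"

definition sqnorm_poly :: "nat \<Rightarrow> (nat \<Rightarrow> real) mpoly" where
  "sqnorm_poly n = mconst (1 / 2 ^ n) * (\<Sum>u\<in>cube n. mvar u * mvar u)"

lemma fourier_poly_mpolys: "fourier_poly n \<alpha> \<in> mpolys (cube n) 1"
  unfolding fourier_poly_def by (intro mpolys_sum mpolys_mconst_mult mpolys_mvar)

lemma low_fourier_poly_mpolys: "low_fourier_poly n d \<alpha> \<in> mpolys (cube n) 1"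
  unfolding low_fourier_poly_def using fourier_poly_mpolys[of n \<alpha>] by auto

lemma sqnorm_poly_mpolys: "sqnorm_poly n \<in> mpolys (cube n) 2"
  unfolding sqnorm_poly_def by (intro mpolys_mconst_mult mpolys_sum mpolys_mult_linear mpolys_mvar)

lemma sqnorm_poly_parseval: "sqnorm_poly n = (\<Sum>\<alpha>\<in>Pow {..<n}. fourier_poly n \<alpha> * fourier_poly n \<alpha>)"
proof -
  let ?c = "1 / (2 ^ n * 2 ^ n) :: real"
  have coeff: "mconst (?c * (a * b)) = mconst (a / 2 ^ n) * mconst (b / 2 ^ n)" for a b
    by (simp add: mconst_mult[symmetric])
  have "(\<Sum>\<alpha>\<in>Pow {..<n}. fourier_poly n \<alpha> * fourier_poly n \<alpha>)
      = (\<Sum>\<alpha>\<in>Pow {..<n}. \<Sum>u\<in>cube n. \<Sum>w\<in>cube n. mconst (?c * (chi \<alpha> u * chi \<alpha> w)) * (mvar u * mvar w))"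
    unfolding fourier_poly_def sum_product coeff by (simp add: algebra_simps)
  also have "\<dots> = (\<Sum>u\<in>cube n. \<Sum>w\<in>cube n.
      mconst (?c * (\<Sum>\<alpha>\<in>Pow {..<n}. chi \<alpha> u * chi \<alpha> w)) * (mvar u * mvar w))"
    by (simp add: sum.swap[of _ "Pow {..<n}"] sum_distrib_left sum_distrib_right mconst_sum)
  also have "\<dots> = (\<Sum>u\<in>cube n. \<Sum>w\<in>cube n. if u = w then mconst (1 / 2 ^ n) * (mvar u * mvar w) else 0)"
    by (intro sum.cong refl) (simp add: chi_orthogonality)
  also have "\<dots> = sqnorm_poly n"
    by (simp add: sqnorm_poly_def finite_cube sum_distrib_left)
  finally show ?thesis ..
qed

text \<open>By Parseval, both factors are nonnegative combinations of the squares of the Fourier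
  coefficients.\<close>
lemma low_deg_bonami_weight_sos:
  "(mconst (3 ^ d) * sqnorm_poly n - bonami_weight n (low_fourier_poly n d))
     * (mconst (3 ^ d) * sqnorm_poly n + bonami_weight n (low_fourier_poly n d)) \<in> sos (cube n) 2"
proof -
  let ?L = "low_fourier_poly n d" and ?N = "sqnorm_poly n" and ?P = "Pow {..<n}"
  define w where "w \<alpha> = (if card \<alpha> \<le> d then 3 ^ card \<alpha> else 0 :: real)" for \<alpha> :: "nat set"
  have w: "0 \<le> 3 ^ d - w \<alpha>" "0 \<le> 3 ^ d + w \<alpha>" for \<alpha>
    unfolding w_def by auto
  have W: "bonami_weight n ?L = (\<Sum>\<alpha>\<in>?P. mconst (w \<alpha>) * (fourier_poly n \<alpha> * fourier_poly n \<alpha>))"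
    unfolding bonami_weight_def low_fourier_poly_def w_def by (rule sum.cong) auto
  have "mconst (3 ^ d) * ?N - bonami_weight n ?L
      = (\<Sum>\<alpha>\<in>?P. mconst (3 ^ d - w \<alpha>) * (fourier_poly n \<alpha> * fourier_poly n \<alpha>))"
    unfolding W sqnorm_poly_parseval sum_distrib_left sum_subtractf[symmetric]
    by (rule sum.cong) (simp_all add: mconst_diff algebra_simps)
  moreover have "mconst (3 ^ d) * ?N + bonami_weight n ?L
      = (\<Sum>\<alpha>\<in>?P. mconst (3 ^ d + w \<alpha>) * (fourier_poly n \<alpha> * fourier_poly n \<alpha>))"
    unfolding W sqnorm_poly_parseval sum_distrib_left sum.distrib[symmetric]
    by (rule sum.cong) (simp_all add: mconst_add algebra_simps)
  moreover have "(\<Sum>\<alpha>\<in>?P. mconst (3 ^ d - w \<alpha>) * (fourier_poly n \<alpha> * fourier_poly n \<alpha>))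
      * (\<Sum>\<alpha>\<in>?P. mconst (3 ^ d + w \<alpha>) * (fourier_poly n \<alpha> * fourier_poly n \<alpha>)) \<in> sos (cube n) 2"
    by (rule weighted_squares_mult_sos) (rule fourier_poly_mpolys w)+
  ultimately show ?thesis by simp
qed

lemma low_deg_quartic_sos_bound:
  "mconst (9 ^ d) * (sqnorm_poly n * sqnorm_poly n)
     - mconst (1 / 2 ^ n) * quartic_moment n (low_fourier_poly n d) (low_fourier_poly n d)
   \<in> sos (cube n) 2"
proof -
  let ?L = "low_fourier_poly n d" and ?N = "sqnorm_poly n"
  have scale: "mconst (1 / 2 ^ n) * (of_nat (2 ^ n) * X) = X" for X :: "(nat \<Rightarrow> real) mpoly"
    by (simp add: of_nat_eq_mconst mult.assoc[symmetric] mconst_mult[symmetric])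
  have nine: "mconst (9 ^ d) = mconst (3 ^ d) * (mconst (3 ^ d) :: (nat \<Rightarrow> real) mpoly)"
    by (simp add: mconst_mult[symmetric] power_mult_distrib[symmetric])
  have "mconst (9 ^ d) * (?N * ?N) - mconst (1 / 2 ^ n) * quartic_moment n ?L ?L
      = (mconst (3 ^ d) * ?N - bonami_weight n ?L) * (mconst (3 ^ d) * ?N + bonami_weight n ?L)
        + mconst (1 / 2 ^ n) * (of_nat (2 ^ n) * (bonami_weight n ?L * bonami_weight n ?L)
                                 - quartic_moment n ?L ?L)"
    unfolding right_diff_distrib[of "mconst (1 / 2 ^ n)"] scale nine by (simp add: algebra_simps)
  also have "\<dots> \<in> sos (cube n) 2"
    by (intro sos.add sos.scale low_deg_bonami_weight_sos quartic_moment_sos_bound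
        low_fourier_poly_mpolys) simp
  finally show ?thesis .
qed

lemma op_poly_eq_coeffs:
  "op_poly U A v = coeffs (\<Sum>u\<in>U. mconst (A (\<lambda>w. if w = u then 1 else 0) v) * mvar u)"
  by (simp add: op_poly_def coeffs_sum coeffs_mconst_mult coeffs_mvar)

lemma fourier_coeff_indicator:
  "u \<in> cube n \<Longrightarrow> fourier_coeff n (\<lambda>w. if w = u then 1 else 0) \<alpha> = chi \<alpha> u / 2 ^ n"
  unfolding fourier_coeff_def card_cube
  by (simp add: if_distrib[of "\<lambda>x. x * _"] finite_cube cong: if_cong)

lemma fourier_sum_low_fourier_poly:
  "fourier_sum n (low_fourier_poly n d) v
     = (\<Sum>u\<in>cube n. mconst (low_deg_proj n d (\<lambda>w. if w = u then 1 else 0) v) * mvar u)"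
proof -
  let ?A = "{\<alpha>. \<alpha> \<subseteq> {..<n} \<and> card \<alpha> \<le> d}"
  have "fourier_sum n (low_fourier_poly n d) v = (\<Sum>\<alpha>\<in>?A. mconst (chi \<alpha> v) * fourier_poly n \<alpha>)"
    unfolding fourier_sum_def low_fourier_poly_def
    by (simp add: if_distrib[of "(*) _"] sum.inter_filter[symmetric] Pow_def conj_commute cong: if_cong)
  also have "\<dots> = (\<Sum>u\<in>cube n. mconst (\<Sum>\<alpha>\<in>?A. chi \<alpha> v * (chi \<alpha> u / 2 ^ n)) * mvar u)"
    unfolding fourier_poly_def sum_distrib_left mult.assoc[symmetric] mconst_mult[symmetric]
    by (simp add: sum.swap[of _ ?A] sum_distrib_right mconst_sum)
  also have "\<dots> = (\<Sum>u\<in>cube n. mconst (low_deg_proj n d (\<lambda>w. if w = u then 1 else 0) v) * mvar u)"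
    by (intro sum.cong refl) (simp add: low_deg_proj_def fourier_coeff_indicator mult_ac)
  finally show ?thesis .
qed

lemma norm4_4_poly_low_deg_proj:
  "norm4_4_poly (cube n) (cube n) (low_deg_proj n d)
     = coeffs (mconst (1 / 2 ^ n) * quartic_moment n (low_fourier_poly n d) (low_fourier_poly n d))"
proof -
  let ?F = "fourier_sum n (low_fourier_poly n d)"
  have "norm4_4_poly (cube n) (cube n) (low_deg_proj n d)
      = coeffs (mconst (1 / 2 ^ n) * (\<Sum>v\<in>cube n. ?F v ^ 4))"
    by (simp add: norm4_4_poly_def op_poly_eq_coeffs fourier_sum_low_fourier_poly[symmetric]
        coeffs_mconst_mult coeffs_sum coeffs_power card_cube)
  also have "(\<Sum>v\<in>cube n. ?F v ^ 4) = quartic_moment n (low_fourier_poly n d) (low_fourier_poly n d)"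
    by (simp add: quartic_moment_def power4_eq_xxxx mult.assoc)
  finally show ?thesis .
qed

lemma norm2_2_poly_cube: "norm2_2_poly (cube n) = coeffs (sqnorm_poly n)"
  unfolding sqnorm_poly_def coeffs_mconst_mult
  by (simp add: norm2_2_poly_def coeffs_sum coeffs_mult coeffs_mvar card_cube)

lemma sphere_constraint_cube:
  "ppow (padd (norm2_2_poly (cube n)) (pconst (-1))) 2 = coeffs ((sqnorm_poly n - 1) * (sqnorm_poly n - 1))"
  by (simp add: norm2_2_poly_cube coeffs_mconst[symmetric] coeffs_add[symmetric] coeffs_power[symmetric]
      mconst_uminus power2_eq_square)

lemma eval_ones_sqnorm_poly: "eval_ones (sqnorm_poly n) = 1"
  by (simp add: sqnorm_poly_def eval_ones_mult eval_ones_mconst eval_ones_sum eval_ones_mvar card_cube)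

lemma pseudo_exp_low_deg_bound:
  assumes pe: "is_pseudo_exp (cube n) 4 E"
    and sphere: "E (ppow (padd (norm2_2_poly (cube n)) (pconst (-1))) 2) = 0"
  shows "E (norm4_4_poly (cube n) (cube n) (low_deg_proj n d)) \<le> 9 ^ d"
proof -
  interpret pseudo_expectation "cube n" 4 E
    using pe by unfold_locales
  let ?N = "sqnorm_poly n"
  let ?G = "mconst (1 / 2 ^ n) * quartic_moment n (low_fourier_poly n d) (low_fourier_poly n d)"
  have N1: "pE (?N * ?N) = 1"
    using sphere by (intro pE_square_eq_1) (simp_all add: sqnorm_poly_mpolys sphere_constraint_cube pE_def)
  have "0 \<le> pE (mconst (9 ^ d) * (?N * ?N) - ?G)"
    using low_deg_quartic_sos_bound by (intro pE_sos_nonneg) simp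
  also have "\<dots> = 9 ^ d - pE ?G"
  proof -
    have "?N * ?N \<in> mpolys (cube n) 4"
      by (intro mpolys_mult_quadratic sqnorm_poly_mpolys)
    moreover have "?G \<in> mpolys (cube n) 4"
      by (intro mpolys_mconst_mult quartic_moment_mpolys low_fourier_poly_mpolys)
    ultimately show ?thesis
      using N1 by (simp add: pE_diff pE_mconst_mult mpolys_mconst_mult)
  qed
  finally show ?thesis
    by (simp add: norm4_4_poly_low_deg_proj pE_def)
qed

lemma sphere_constraint_ones_pexp:
  "ones_pexp (cube n) 4 (ppow (padd (norm2_2_poly (cube n)) (pconst (-1))) 2) = 0"
  by (simp add: sphere_constraint_cube ones_pexp_coeffs finite_cube mpolys_mult_quadratic
      mpolys_diff sqnorm_poly_mpolys mpolys_one eval_ones_mult eval_ones_diff eval_ones_one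
      eval_ones_sqnorm_poly)

theorem theorem2p2:
  fixes n d :: nat
  assumes "d \<le> n"
  shows "tensor_sdp (cube n) (cube n) (low_deg_proj n d) \<le> 9 ^ d"
  unfolding tensor_sdp_def tensor_sdp_level_def
  using is_pseudo_exp_ones_pexp[OF finite_cube] sphere_constraint_ones_pexp pseudo_exp_low_deg_bound
  by (intro cSup_least) blast+

end
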